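(* Assume $X$ is convex, $f$ is convex, and $X^\infty\cap\mathcal{K}(f)\neq\{0\}$. Then there exists a sequence $u_k\in\mathbb{R}^n$ with $u_k\to0$ such that $\mathrm{Sol}(u_k)=\emptyset$ for every $k\in\mathbb{N}$.
   Context: Standing assumptions: $f:\mathbb{R}^n\to\mathbb{R}\cup\{\pm\infty\}$ is proper (never $-\infty$ and finite at some point) and lower semicontinuous; $X\subset\mathbb{R}^n$ is a nonempty closed set with $\operatorname{dom}f\cap X$ unbounded. $X^\infty=\{u:\exists t_k\to+\infty,\ \exists x_k\in X,\ x_k/t_k\to u\}$; $f^\infty(d)=\inf\{\liminf_{k} f(t_kd_k)/t_k:\ t_k\to+\infty,\ d_k\to d\}$; $\mathcal{K}(f)=\{d: f^\infty(d)\le 0\}$. For $u\in\mathbb{R}^n$, $f_u(x)=f(x)-\langle u,x\rangle$ and $\mathrm{Sol}(u)=\{x\in X: f_u(x)\le f_u(y)\ \forall y\in X\}$. *)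

theory Defs
  imports "HOL-Analysis.Analysis"
begin

definition proper_fun :: "('a::euclidean_space \<Rightarrow> ereal) \<Rightarrow> bool" where
  "proper_fun f \<longleftrightarrow> (\<forall>x. f x \<noteq> -\<infinity>) \<and> (\<exists>x. \<bar>f x\<bar> \<noteq> \<infinity>)"

definition lsc_fun :: "('a::euclidean_space \<Rightarrow> ereal) \<Rightarrow> bool" where
  "lsc_fun f \<longleftrightarrow> (\<forall>x s. s \<longlonglongrightarrow> x \<longrightarrow> f x \<le> liminf (\<lambda>k. f (s k)))"

definition dom_fun :: "('a::euclidean_space \<Rightarrow> ereal) \<Rightarrow> 'a set" where
  "dom_fun f = {x. f x < \<infinity>}"

text \<open>Convexity of an extended-valued function (never \<open>-\<infinity>\<close> here).\<close>
definition convex_fun :: "('a::euclidean_space \<Rightarrow> ereal) \<Rightarrow> bool" where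
  "convex_fun f \<longleftrightarrow> (\<forall>x y t. 0 < t \<and> t < 1 \<longrightarrow>
      f ((1 - t) *\<^sub>R x + t *\<^sub>R y) \<le> ereal (1 - t) * f x + ereal t * f y)"

definition asymp_cone :: "'a::euclidean_space set \<Rightarrow> 'a set" where
  "asymp_cone X = {u. \<exists>t :: nat \<Rightarrow> real. \<exists>x :: nat \<Rightarrow> 'a.
      filterlim t at_top sequentially \<and> (\<forall>k. x k \<in> X) \<and> (\<lambda>k. x k /\<^sub>R t k) \<longlonglongrightarrow> u}"

definition asymp_fun :: "('a::euclidean_space \<Rightarrow> ereal) \<Rightarrow> 'a \<Rightarrow> ereal" where
  "asymp_fun f d = Inf {liminf (\<lambda>k. f (t k *\<^sub>R dd k) / ereal (t k)) | t dd.
      filterlim t at_top sequentially \<and> dd \<longlonglongrightarrow> d}"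

definition Kf :: "('a::euclidean_space \<Rightarrow> ereal) \<Rightarrow> 'a set" where
  "Kf f = {d. asymp_fun f d \<le> 0}"

definition Sol :: "('a::euclidean_space \<Rightarrow> ereal) \<Rightarrow> 'a set \<Rightarrow> 'a \<Rightarrow> 'a set" where
  "Sol f X u = {x \<in> X. \<forall>y \<in> X. f x - ereal (u \<bullet> x) \<le> f y - ereal (u \<bullet> y)}"

end

theory Submission
  imports Defs
begin

text \<open>Pick \<open>x\<^sub>0 \<in> X \<inter> dom f\<close> and a nonzero direction \<open>d \<in> X\<^sup>\<infinity> \<inter> \<K>(f)\<close> (it exists because
  \<open>0\<close> always lies in both cones). Convexity and closedness of \<open>X\<close> keep the whole ray
  \<open>x\<^sub>0 + s d\<close> in \<open>X\<close>; convexity and lower semicontinuity of \<open>f\<close> turn \<open>f\<^sup>\<infinity>(d) \<le> 0\<close> into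
  \<open>f(x\<^sub>0 + s d) \<le> f(x\<^sub>0) + s \<delta>\<close> for every \<open>\<delta> > 0\<close>. Tilting by \<open>u = \<epsilon> d\<close> subtracts \<open>s \<epsilon> |d|\<^sup>2\<close>
  along the ray, so with \<open>\<delta> = \<epsilon> |d|\<^sup>2 / 2\<close> the tilted objective is unbounded below on \<open>X\<close> and
  has no minimiser. Take \<open>u\<^sub>k = d / (k + 1)\<close>.\<close>

lemma frequently_sequentially_subseq:
  assumes "frequently P sequentially"
  obtains r :: "nat \<Rightarrow> nat" where "strict_mono r" "\<And>n. P (r n)"
proof -
  have "infinite {n. P n}"
    using assms by (simp add: frequently_cofinite flip: cofinite_eq_sequentially)
  then show ?thesis using infinite_enumerate that by blast
qed

lemma Liminf_less_imp_frequently_less: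
  fixes X :: "_ \<Rightarrow> _ :: complete_linorder"
  assumes "Liminf F X < C"
  shows "frequently (\<lambda>x. X x < C) F"
proof -
  obtain y where "y < C" and "\<not> eventually (\<lambda>x. y < X x) F"
    using assms le_Liminf_iff[of C F X] by (auto simp: not_le)
  then have "frequently (\<lambda>x. X x \<le> y) F"
    by (simp add: not_eventually not_less)
  then show ?thesis
    by (rule frequently_elim1) (use \<open>y < C\<close> in auto)
qed

lemma asymp_fun_less_witness:
  fixes f :: "'a::euclidean_space \<Rightarrow> ereal"
  assumes "asymp_fun f d < ereal \<delta>"
  obtains t dd where "filterlim t at_top sequentially" "dd \<longlonglongrightarrow> d"
    "\<And>k. t k > 0" "\<And>k. f (t k *\<^sub>R dd k) < ereal (t k * \<delta>)"
proof -
  obtain t dd where t: "filterlim t at_top sequentially" and dd: "dd \<longlonglongrightarrow> d"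
    and lim: "liminf (\<lambda>k. f (t k *\<^sub>R dd k) / ereal (t k)) < ereal \<delta>"
    using assms unfolding asymp_fun_def by (auto simp: Inf_less_iff)
  have "frequently (\<lambda>k. f (t k *\<^sub>R dd k) / ereal (t k) < ereal \<delta>) sequentially"
    using lim by (rule Liminf_less_imp_frequently_less)
  moreover have "eventually (\<lambda>k. t k > 0) sequentially"
    using t by (simp add: filterlim_at_top_dense)
  ultimately have "frequently (\<lambda>k. f (t k *\<^sub>R dd k) / ereal (t k) < ereal \<delta> \<and> t k > 0) sequentially"
    by (rule frequently_eventually_frequently)
  then obtain r :: "nat \<Rightarrow> nat" where r: "strict_mono r"
    and rP: "\<And>n. f (t (r n) *\<^sub>R dd (r n)) / ereal (t (r n)) < ereal \<delta> \<and> t (r n) > 0"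
    by (rule frequently_sequentially_subseq) (rule that)
  have "f (t (r n) *\<^sub>R dd (r n)) < ereal (t (r n) * \<delta>)" for n
    using rP[of n] by (cases "f (t (r n) *\<^sub>R dd (r n))") (auto simp: field_simps)
  moreover have "filterlim (t \<circ> r) at_top sequentially"
    using filterlim_compose[OF t filterlim_subseq[OF r]] by (simp add: comp_def)
  ultimately show ?thesis
    using that[of "t \<circ> r" "dd \<circ> r"] LIMSEQ_subseq_LIMSEQ[OF dd r] rP by auto
qed

lemma tendsto_convex_comb_along_ray:
  fixes x0 :: "'a::real_normed_vector"
  assumes t: "filterlim t at_top sequentially" and z: "(\<lambda>k. z k /\<^sub>R t k) \<longlonglongrightarrow> d"
  shows "(\<lambda>k. (1 - s / t k) *\<^sub>R x0 + (s / t k) *\<^sub>R z k) \<longlonglongrightarrow> x0 + s *\<^sub>R d"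
proof -
  have "(\<lambda>k. s / t k) \<longlonglongrightarrow> 0"
    using tendsto_mult[OF tendsto_const[of s] tendsto_inverse_0_at_top[OF t]]
    by (simp add: divide_inverse)
  then have "(\<lambda>k. (1 - s / t k) *\<^sub>R x0 + s *\<^sub>R (z k /\<^sub>R t k)) \<longlonglongrightarrow> (1 - 0) *\<^sub>R x0 + s *\<^sub>R d"
    by (intro tendsto_intros z)
  then show ?thesis
    by (simp add: divide_inverse)
qed

lemma asymp_cone_ray_in:
  fixes X :: "'a::euclidean_space set"
  assumes "convex X" and "closed X" and x0: "x0 \<in> X"
    and "d \<in> asymp_cone X" and s: "0 \<le> s"
  shows "x0 + s *\<^sub>R d \<in> X"
proof -
  obtain t x where t: "filterlim t at_top sequentially" and xX: "\<And>k. x k \<in> X"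
    and x: "(\<lambda>k. x k /\<^sub>R t k) \<longlonglongrightarrow> d"
    using \<open>d \<in> asymp_cone X\<close> unfolding asymp_cone_def by blast
  have "eventually (\<lambda>k. (1 - s / t k) *\<^sub>R x0 + (s / t k) *\<^sub>R x k \<in> X) sequentially"
    using t unfolding filterlim_at_top_dense
  proof (rule eventually_mono[OF spec[of _ "max s 0"]])
    fix k assume "max s 0 < t k"
    then have "0 \<le> s / t k" "s / t k \<le> 1" using s by auto
    then show "(1 - s / t k) *\<^sub>R x0 + (s / t k) *\<^sub>R x k \<in> X"
      by (rule convexD_alt[OF \<open>convex X\<close> x0 xX])
  qed
  then show ?thesis
    by (rule Lim_in_closed_set[OF \<open>closed X\<close> _ sequentially_bot tendsto_convex_comb_along_ray[OF t x]])
qed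

lemma asymp_fun_ray_le:
  fixes f :: "'a::euclidean_space \<Rightarrow> ereal"
  assumes lsc: "lsc_fun f" and cvx: "convex_fun f" and fx0: "f x0 = ereal a"
    and "asymp_fun f d < ereal \<delta>" and s: "0 < s"
  shows "f (x0 + s *\<^sub>R d) \<le> ereal (a + s * \<delta>)"
proof -
  obtain t dd where t: "filterlim t at_top sequentially" and dd: "dd \<longlonglongrightarrow> d"
    and tpos: "\<And>k. t k > 0" and below: "\<And>k. f (t k *\<^sub>R dd k) < ereal (t k * \<delta>)"
    by (rule asymp_fun_less_witness[OF \<open>asymp_fun f d < ereal \<delta>\<close>]) (rule that)
  define P where "P k = (1 - s / t k) *\<^sub>R x0 + (s / t k) *\<^sub>R (t k *\<^sub>R dd k)" for k
  define B where "B k = (1 - s / t k) * a + s * \<delta>" for k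
  have "(t k *\<^sub>R dd k) /\<^sub>R t k = dd k" for k
    using tpos[of k] by simp
  then have P: "P \<longlonglongrightarrow> x0 + s *\<^sub>R d"
    unfolding P_def using tendsto_convex_comb_along_ray[OF t, of "\<lambda>k. t k *\<^sub>R dd k"] dd by simp
  have "f (x0 + s *\<^sub>R d) \<le> liminf (\<lambda>k. f (P k))"
    using lsc P unfolding lsc_fun_def by blast
  also have "\<dots> \<le> liminf (\<lambda>k. ereal (B k))"
  proof (rule Liminf_mono)
    show "eventually (\<lambda>k. f (P k) \<le> ereal (B k)) sequentially"
      using t unfolding filterlim_at_top_dense
    proof (rule eventually_mono[OF spec[of _ s]])
      fix k assume "s < t k"
      then have st: "0 < s / t k" "s / t k < 1" using s by auto
      have "f (P k) \<le> ereal (1 - s / t k) * f x0 + ereal (s / t k) * f (t k *\<^sub>R dd k)"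
        using cvx st unfolding convex_fun_def P_def by blast
      also have "\<dots> \<le> ereal (1 - s / t k) * ereal a + ereal (s / t k) * ereal (t k * \<delta>)"
        unfolding fx0 using below[of k] st by (intro add_left_mono ereal_mult_left_mono) auto
      also have "\<dots> = ereal (B k)"
        using tpos[of k] by (simp add: B_def)
      finally show "f (P k) \<le> ereal (B k)" .
    qed
  qed
  also have "\<dots> = ereal (a + s * \<delta>)"
  proof (rule lim_imp_Liminf)
    have "(\<lambda>k. s / t k) \<longlonglongrightarrow> 0"
      using tendsto_mult[OF tendsto_const[of s] tendsto_inverse_0_at_top[OF t]]
      by (simp add: divide_inverse)
    then have "(\<lambda>k. (1 - s / t k) * a + s * \<delta>) \<longlonglongrightarrow> (1 - 0) * a + s * \<delta>"
      by (intro tendsto_intros)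
    then show "(\<lambda>k. ereal (B k)) \<longlonglongrightarrow> ereal (a + s * \<delta>)"
      unfolding B_def by (simp add: tendsto_ereal)
  qed simp
  finally show ?thesis .
qed

lemma Sol_empty_if_unbounded_below:
  fixes f :: "'a::euclidean_space \<Rightarrow> ereal"
  assumes "\<And>x. f x \<noteq> -\<infinity>" and "\<And>B. \<exists>y\<in>X. f y - ereal (u \<bullet> y) < ereal B"
  shows "Sol f X u = {}"
proof (rule ccontr)
  assume "Sol f X u \<noteq> {}"
  then obtain x where opt: "\<And>y. y \<in> X \<Longrightarrow> f x - ereal (u \<bullet> x) \<le> f y - ereal (u \<bullet> y)"
    unfolding Sol_def by blast
  obtain B where "ereal B \<le> f x - ereal (u \<bullet> x)"
    using \<open>f x \<noteq> -\<infinity>\<close> by (cases "f x") (auto intro: order.refl)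
  moreover obtain y where "y \<in> X" "f y - ereal (u \<bullet> y) < ereal B"
    using assms(2) by blast
  ultimately show False
    using opt[of y] by simp
qed

lemma tilted_unbounded_below_along_asymp_direction:
  fixes f :: "'a::euclidean_space \<Rightarrow> ereal"
  assumes lsc: "lsc_fun f" and cvx: "convex_fun f" and "convex X" and "closed X"
    and x0: "x0 \<in> X" and fx0: "f x0 = ereal a"
    and dA: "d \<in> asymp_cone X" and dK: "d \<in> Kf f" and "d \<noteq> 0" and "0 < \<epsilon>"
  shows "\<exists>y\<in>X. f y - ereal ((\<epsilon> *\<^sub>R d) \<bullet> y) < ereal B"
proof -
  define \<delta> where "\<delta> = \<epsilon> * (d \<bullet> d) / 2"
  define c where "c = a - \<epsilon> * (d \<bullet> x0)"
  define s where "s = max 1 ((\<bar>c - B\<bar> + 1) / \<delta>)"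
  have \<delta>: "0 < \<delta>"
    using \<open>d \<noteq> 0\<close> \<open>0 < \<epsilon>\<close> by (simp add: \<delta>_def)
  have "0 < s"
    by (simp add: s_def)
  have "(\<bar>c - B\<bar> + 1) / \<delta> \<le> s"
    by (simp add: s_def)
  then have "\<bar>c - B\<bar> + 1 \<le> s * \<delta>"
    using \<delta> by (simp add: field_simps)
  have "asymp_fun f d < ereal \<delta>"
    using dK \<delta> unfolding Kf_def by (simp add: le_less_trans)
  then have "f (x0 + s *\<^sub>R d) \<le> ereal (a + s * \<delta>)"
    by (rule asymp_fun_ray_le[OF lsc cvx fx0 _ \<open>0 < s\<close>])
  then have "f (x0 + s *\<^sub>R d) - ereal ((\<epsilon> *\<^sub>R d) \<bullet> (x0 + s *\<^sub>R d))
      \<le> ereal (a + s * \<delta>) - ereal ((\<epsilon> *\<^sub>R d) \<bullet> (x0 + s *\<^sub>R d))"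
    by (rule ereal_minus_mono) simp
  also have "\<dots> = ereal (c - s * \<delta>)"
    by (simp add: c_def \<delta>_def inner_add_right algebra_simps)
  also have "\<dots> < ereal B"
    using \<open>\<bar>c - B\<bar> + 1 \<le> s * \<delta>\<close> by simp
  finally have "f (x0 + s *\<^sub>R d) - ereal ((\<epsilon> *\<^sub>R d) \<bullet> (x0 + s *\<^sub>R d)) < ereal B" .
  moreover have "x0 + s *\<^sub>R d \<in> X"
    using asymp_cone_ray_in[OF \<open>convex X\<close> \<open>closed X\<close> x0 dA] \<open>0 < s\<close> by simp
  ultimately show ?thesis
    by (rule bexI)
qed

lemma zero_in_asymp_cone:
  assumes "x0 \<in> X"
  shows "0 \<in> asymp_cone X"
proof -
  have "filterlim (\<lambda>k. real (Suc k)) at_top sequentially"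
    by (rule filterlim_compose[OF filterlim_real_sequentially filterlim_Suc])
  moreover have "(\<lambda>k. x0 /\<^sub>R real (Suc k)) \<longlonglongrightarrow> 0"
    using tendsto_scaleR[OF LIMSEQ_inverse_real_of_nat tendsto_const[of x0]] by simp
  ultimately show ?thesis
    unfolding asymp_cone_def using assms
    by (intro CollectI exI[of _ "\<lambda>k. real (Suc k)"] exI[of _ "\<lambda>k. x0"]) auto
qed

lemma zero_in_Kf:
  fixes f :: "'a::euclidean_space \<Rightarrow> ereal"
  assumes "f x0 = ereal a"
  shows "0 \<in> Kf f"
proof -
  have t: "filterlim (\<lambda>k. real (Suc k)) at_top sequentially"
    by (rule filterlim_compose[OF filterlim_real_sequentially filterlim_Suc])
  have dd: "(\<lambda>k. x0 /\<^sub>R real (Suc k)) \<longlonglongrightarrow> 0"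
    using tendsto_scaleR[OF LIMSEQ_inverse_real_of_nat tendsto_const[of x0]] by simp
  have "(\<lambda>k. ereal (a * inverse (real (Suc k)))) \<longlonglongrightarrow> ereal (a * 0)"
    by (intro tendsto_intros LIMSEQ_inverse_real_of_nat)
  then have "liminf (\<lambda>k. ereal (a * inverse (real (Suc k)))) = 0"
    by (simp add: lim_imp_Liminf zero_ereal_def)
  then have "0 = liminf (\<lambda>k. f (real (Suc k) *\<^sub>R (x0 /\<^sub>R real (Suc k))) / ereal (real (Suc k)))"
    using assms by (simp add: divide_inverse del: of_nat_Suc)
  then have "asymp_fun f 0 \<le> 0"
    unfolding asymp_fun_def using t dd
    by (intro Inf_lower2[of 0])
      (auto intro!: exI[of _ "\<lambda>k. real (Suc k)"] exI[of _ "\<lambda>k. x0 /\<^sub>R real (Suc k)"])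
  then show ?thesis
    by (simp add: Kf_def)
qed

theorem mainTheorem6:
  fixes f :: "'a::euclidean_space \<Rightarrow> ereal" and X :: "'a set"
  assumes "proper_fun f" and "lsc_fun f"
    and "X \<noteq> {}" and "closed X" and "\<not> bounded (dom_fun f \<inter> X)"
    and "convex X" and "convex_fun f"
    and "asymp_cone X \<inter> Kf f \<noteq> {0}"
  shows "\<exists>u :: nat \<Rightarrow> 'a. u \<longlonglongrightarrow> 0 \<and> (\<forall>k. Sol f X (u k) = {})"
proof -
  have "dom_fun f \<inter> X \<noteq> {}"
    using \<open>\<not> bounded (dom_fun f \<inter> X)\<close> by auto
  then obtain x0 where "x0 \<in> X" "f x0 < \<infinity>"
    unfolding dom_fun_def by blast
  moreover have "f x0 \<noteq> -\<infinity>"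
    using \<open>proper_fun f\<close> by (simp add: proper_fun_def)
  ultimately obtain a where fx0: "f x0 = ereal a"
    by (cases "f x0") auto
  obtain d where dA: "d \<in> asymp_cone X" and dK: "d \<in> Kf f" and "d \<noteq> 0"
    using \<open>asymp_cone X \<inter> Kf f \<noteq> {0}\<close> zero_in_asymp_cone[OF \<open>x0 \<in> X\<close>] zero_in_Kf[of f, OF fx0]
    by blast
  define u where "u k = inverse (real (Suc k)) *\<^sub>R d" for k
  have "u \<longlonglongrightarrow> 0"
    unfolding u_def using tendsto_scaleR[OF LIMSEQ_inverse_real_of_nat tendsto_const[of d]] by simp
  moreover have "Sol f X (u k) = {}" for k
    unfolding u_def using \<open>proper_fun f\<close>
    by (intro Sol_empty_if_unbounded_below tilted_unbounded_below_along_asymp_direction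
        [OF \<open>lsc_fun f\<close> \<open>convex_fun f\<close> \<open>convex X\<close> \<open>closed X\<close> \<open>x0 \<in> X\<close> fx0 dA dK \<open>d \<noteq> 0\<close>])
      (auto simp: proper_fun_def)
  ultimately show ?thesis
    by blast
qed

end
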